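(* Let $X$ be a finite set and $k^*<k<|X|$ integers with $2k-k^*\le|X|$. Let $\mathcal{P}\subseteq\binom{X}{k}$ be such that whenever $Z,Y\in\binom{X}{k}$ satisfy $|Z\cap Y|=k^*$, we have $Z\in\mathcal{P}\Leftrightarrow Y\in\mathcal{P}$. Then either $\mathcal{P}=\emptyset$ or $\mathcal{P}=\binom{X}{k}$, or else $|X|=2k$, $k^*=0$, and for every $Y\in\binom{X}{k}$ we have $Y\in\mathcal{P}\Leftrightarrow X\setminus Y\in\mathcal{P}$ (i.e. $\mathcal{P}$ is a union of pairs $\{Y,X\setminus Y\}$).
   Context: $\binom{X}{k}=\{Y\subseteq X:|Y|=k\}$. *)

theory Defs
  imports Main
begin

definition binom :: "'a set \<Rightarrow> nat \<Rightarrow> 'a set set" where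
  "binom X k = {Y. Y \<subseteq> X \<and> card Y = k}"

end

theory Submission
  imports Defs
begin

text \<open>Two \<open>k\<close>-subsets are joined by a chain of single exchanges \<open>Z \<mapsto> Z - {a} \<union> {b}\<close>, so a
  family invariant under exchanges is empty or everything. If \<open>Z'\<close> arises from \<open>Z\<close> by one exchange,
  there is a \<open>k\<close>-set \<open>Y\<close> meeting both in exactly \<open>k\<^sup>*\<close> points (take \<open>a\<close>, \<open>b\<close>, \<open>k\<^sup>* - 1\<close> further
  points of \<open>Z\<close> and fill up outside \<open>Z \<union> {b}\<close>); then \<open>Z \<in> \<P> \<longleftrightarrow> Y \<in> \<P> \<longleftrightarrow> Z' \<in> \<P>\<close>. This fails only
  when \<open>k\<^sup>* = 0\<close> and there is no room outside, i.e. \<open>|X| = 2k\<close>, where \<open>Y\<close> must be the complement.\<close>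

lemma binom_finite_card:
  assumes "finite X" and "Z \<in> binom X k"
  shows "Z \<subseteq> X" "finite Z" "card Z = k"
  using assms finite_subset by (auto simp: binom_def)

lemma exchange_in_binom:
  assumes "finite X" and "Z \<in> binom X k" and "a \<in> Z" and "b \<in> X - Z"
  shows "insert b (Z - {a}) \<in> binom X k"
proof -
  note Z = binom_finite_card[OF assms(1,2)]
  with \<open>a \<in> Z\<close> have "0 < card Z" by (auto simp: card_gt_0_iff)
  with Z assms(3,4) show ?thesis by (auto simp: binom_def card_insert_if)
qed

lemma complement_in_binom:
  assumes "finite X" and "card X = 2 * k" and "Y \<in> binom X k"
  shows "X - Y \<in> binom X k"
  using binom_finite_card[OF assms(1,3)] assms(2) by (simp add: binom_def card_Diff_subset)

lemma card_Diff_eq_if_card_eq: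
  assumes "finite Z" and "finite W" and "card Z = card W"
  shows "card (Z - W) = card (W - Z)"
  using assms by (simp add: card_Diff_subset_Int Int_commute)

lemma binom_exchange_connected:
  assumes "finite X"
    and exchange: "\<And>Z a b. Z \<in> binom X k \<Longrightarrow> a \<in> Z \<Longrightarrow> b \<in> X - Z \<Longrightarrow> Q Z \<longleftrightarrow> Q (insert b (Z - {a}))"
    and Z: "Z \<in> binom X k" and W: "W \<in> binom X k"
  shows "Q Z \<longleftrightarrow> Q W"
  using Z
proof (induction "card (Z - W)" arbitrary: Z)
  case 0
  note Z = binom_finite_card[OF \<open>finite X\<close> "0.prems"] and W = binom_finite_card[OF \<open>finite X\<close> W]
  from "0.hyps" Z have "Z \<subseteq> W" by simp
  with Z W have "Z = W" by (simp add: card_subset_eq)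
  then show ?case by simp
next
  case (Suc m)
  note Z = binom_finite_card[OF \<open>finite X\<close> Suc.prems] and W = binom_finite_card[OF \<open>finite X\<close> W]
  obtain a where a: "a \<in> Z" "a \<notin> W"
    using Suc.hyps(2) by (metis DiffE card.empty ex_in_conv nat.distinct(1))
  have "card (W - Z) = Suc m"
    using Suc.hyps(2) card_Diff_eq_if_card_eq[of Z W] Z W by simp
  then obtain b where b: "b \<in> W" "b \<notin> Z"
    by (metis DiffE card.empty ex_in_conv nat.distinct(1))
  let ?Z' = "insert b (Z - {a})"
  have Z': "?Z' \<in> binom X k"
    using exchange_in_binom[OF \<open>finite X\<close> Suc.prems a(1)] b W by auto
  have "?Z' - W = (Z - W) - {a}"
    using a b by auto
  then have "m = card (?Z' - W)"
    using Suc.hyps(2) a Z by simp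
  then have "Q ?Z' \<longleftrightarrow> Q W"
    using Suc.hyps(1) Z' by blast
  moreover have "Q Z \<longleftrightarrow> Q ?Z'"
    using exchange[OF Suc.prems a(1)] b W by auto
  ultimately show ?case by blast
qed

lemma exchange_common_intersection:
  assumes "finite X" and "s < k" and "2 * k - s \<le> card X"
    and room: "1 \<le> s \<or> 2 * k < card X"
    and Z: "Z \<in> binom X k" and a: "a \<in> Z" and b: "b \<in> X - Z"
  shows "\<exists>Y \<in> binom X k. card (Z \<inter> Y) = s \<and> card (insert b (Z - {a}) \<inter> Y) = s"
proof -
  note Z = binom_finite_card[OF \<open>finite X\<close> Z]
  define Out where "Out = X - insert b Z"
  have card_Out: "card Out = card X - k - 1"
    using Z b \<open>finite X\<close> by (simp add: Out_def card_Diff_subset)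
  have Out: "finite Out" "Out \<subseteq> X" "Out \<inter> Z = {}" "b \<notin> Out"
    using \<open>finite X\<close> by (auto simp: Out_def)
  show ?thesis
  proof (cases "1 \<le> s")
    case True
    have "s - 1 \<le> card (Z - {a})"
      using Z a \<open>s < k\<close> by simp
    then obtain S where S: "S \<subseteq> Z - {a}" "card S = s - 1"
      by (rule obtain_subset_with_card_n)
    have "k - s - 1 \<le> card Out"
      using card_Out assms(2,3) True by simp
    then obtain T where T: "T \<subseteq> Out" "card T = k - s - 1"
      by (rule obtain_subset_with_card_n)
    have fin: "finite S" "finite T"
      using S T Z Out finite_subset by blast+
    define Y where "Y = insert a (insert b (S \<union> T))"
    have disj: "S \<inter> T = {}" "a \<notin> S \<union> T" "b \<notin> S \<union> T" "a \<noteq> b"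
      using S T Out a b by auto
    have "Y \<in> binom X k"
      using disj fin S T Z Out a b \<open>s < k\<close> True
      by (auto simp: Y_def binom_def card_Un_disjoint)
    moreover have "Z \<inter> Y = insert a S" "insert b (Z - {a}) \<inter> Y = insert b S"
      using S T Out a b by (auto simp: Y_def)
    moreover have "card (insert a S) = s" "card (insert b S) = s"
      using S disj fin True by auto
    ultimately show ?thesis by metis
  next
    case False
    with room have "k \<le> card Out"
      using card_Out by simp
    then obtain T where T: "T \<subseteq> Out" "card T = k"
      by (rule obtain_subset_with_card_n)
    then have "T \<in> binom X k" "Z \<inter> T = {}" "insert b (Z - {a}) \<inter> T = {}"
      using Out by (auto simp: binom_def)
    then show ?thesis
      using False by (intro bexI[of _ T]) auto
  qed
qed

theorem claim12p3:
  fixes X :: "'a set" and P :: "'a set set" and k ks :: nat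
  assumes "finite X"
    and "ks < k" and "k < card X" and "2 * k - ks \<le> card X"
    and "P \<subseteq> binom X k"
    and "\<And>Z Y. Z \<in> binom X k \<Longrightarrow> Y \<in> binom X k \<Longrightarrow> card (Z \<inter> Y) = ks
            \<Longrightarrow> (Z \<in> P \<longleftrightarrow> Y \<in> P)"
  shows "P = {} \<or> P = binom X k \<or>
         (card X = 2 * k \<and> ks = 0 \<and> (\<forall>Y \<in> binom X k. Y \<in> P \<longleftrightarrow> X - Y \<in> P))"
proof (cases "card X = 2 * k \<and> ks = 0")
  case True
  have "Y \<in> P \<longleftrightarrow> X - Y \<in> P" if "Y \<in> binom X k" for Y
    using assms(6)[OF that complement_in_binom[OF assms(1) _ that]] True by auto
  with True show ?thesis by blast
next
  case False
  with assms(4) have room: "1 \<le> ks \<or> 2 * k < card X" by auto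
  have exchange: "Z \<in> P \<longleftrightarrow> insert b (Z - {a}) \<in> P"
    if Z: "Z \<in> binom X k" and a: "a \<in> Z" and b: "b \<in> X - Z" for Z a b
  proof -
    obtain Y where Y: "Y \<in> binom X k"
      and "card (Z \<inter> Y) = ks" "card (insert b (Z - {a}) \<inter> Y) = ks"
      using exchange_common_intersection[OF assms(1,2,4) room Z a b] by blast
    then show ?thesis
      using assms(6)[OF Z Y] assms(6)[OF exchange_in_binom[OF assms(1) Z a b] Y] by blast
  qed
  have "P = {} \<or> P = binom X k"
  proof (cases "P = {}")
    case False
    then obtain W where "W \<in> P" by auto
    then have "Z \<in> P" if "Z \<in> binom X k" for Z
      using binom_exchange_connected[where Q = "\<lambda>Z. Z \<in> P", OF assms(1) exchange that] assms(5) by blast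
    with assms(5) show ?thesis by blast
  qed simp
  then show ?thesis by blast
qed

end
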